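(* A connected subcubic graph $G$ satisfies $2\alpha(G)=\mathrm{diss}(G)$ if and only if $G\in\mathcal{G}$.
   Context: All graphs are finite, simple and undirected; subcubic means maximum degree at most $3$. $\alpha(G)$ is the independence number. A set $D$ of vertices is a dissociation set if $G[D]$ has maximum degree at most $1$, and $\mathrm{diss}(G)$ is the maximum order of a dissociation set. Let $K_4^*$ be the graph obtained from $K_4$ with vertices $a,b,c,d$ by subdividing the edge $ab$ twice (i.e. replacing $ab$ by a path $a\,x\,y\,b$ with two new vertices $x,y$). The class $\mathcal{G}$ consists of $K_4$ together with all connected subcubic graphs obtained as follows: take the disjoint union of (at least one, finitely many) copies of the following three marked graphs: (1) $K_2$ with both vertices marked; (2) $K_3$ with exactly two of its three vertices marked; (3) $K_4^*$ with the two subdivision vertices $x,y$ and the vertices $c,d$ marked (so $a,b$ are unmarked); then add additional edges between vertices of the union, each added edge being incident with at most one marked vertex, such that the resulting graph is simple, connected and subcubic. *)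

theory Defs
  imports Main "HOL-Library.Disjoint_Sets"
begin

definition simple_graph :: "'a set \<Rightarrow> 'a set set \<Rightarrow> bool" where
  "simple_graph V E \<longleftrightarrow> finite V \<and>
     (\<forall>e\<in>E. \<exists>u v. e = {u, v} \<and> u \<noteq> v \<and> u \<in> V \<and> v \<in> V)"

definition degree :: "'a set set \<Rightarrow> 'a \<Rightarrow> nat" where
  "degree E v = card {e \<in> E. v \<in> e}"

definition subcubic :: "'a set \<Rightarrow> 'a set set \<Rightarrow> bool" where
  "subcubic V E \<longleftrightarrow> (\<forall>v\<in>V. degree E v \<le> 3)"

definition adj :: "'a set set \<Rightarrow> 'a \<Rightarrow> 'a \<Rightarrow> bool" where
  "adj E u v \<longleftrightarrow> {u, v} \<in> E"

definition connected_graph :: "'a set \<Rightarrow> 'a set set \<Rightarrow> bool" where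
  "connected_graph V E \<longleftrightarrow> V \<noteq> {} \<and> (\<forall>u\<in>V. \<forall>v\<in>V. (adj E)\<^sup>*\<^sup>* u v)"

definition independent_set :: "'a set \<Rightarrow> 'a set set \<Rightarrow> 'a set \<Rightarrow> bool" where
  "independent_set V E S \<longleftrightarrow> S \<subseteq> V \<and> (\<forall>u\<in>S. \<forall>v\<in>S. \<not> adj E u v)"

definition alpha :: "'a set \<Rightarrow> 'a set set \<Rightarrow> nat" where
  "alpha V E = Max (card ` {S. independent_set V E S})"

definition dissociation_set :: "'a set \<Rightarrow> 'a set set \<Rightarrow> 'a set \<Rightarrow> bool" where
  "dissociation_set V E S \<longleftrightarrow> S \<subseteq> V \<and> (\<forall>v\<in>S. card {u\<in>S. adj E u v} \<le> 1)"

definition diss :: "'a set \<Rightarrow> 'a set set \<Rightarrow> nat" where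
  "diss V E = Max (card ` {S. dissociation_set V E S})"

text \<open>The three marked template graphs, indexed 0 (K2), 1 (K3), 2 (K4*).
  For K4*: a = 0, b = 1, c = 2, d = 3, x = 4, y = 5.\<close>
definition templ_V :: "nat \<Rightarrow> nat set" where
  "templ_V t = (if t = 0 then {0, 1} else if t = 1 then {0, 1, 2} else {0, 1, 2, 3, 4, 5})"

definition templ_E :: "nat \<Rightarrow> nat set set" where
  "templ_E t = (if t = 0 then {{0, 1}}
     else if t = 1 then {{0, 1}, {0, 2}, {1, 2}}
     else {{0, 2}, {0, 3}, {1, 2}, {1, 3}, {2, 3}, {0, 4}, {4, 5}, {5, 1}})"

definition templ_M :: "nat \<Rightarrow> nat set" where
  "templ_M t = (if t = 0 then {0, 1} else if t = 1 then {0, 1} else {4, 5, 2, 3})"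

definition is_K4 :: "'a set \<Rightarrow> 'a set set \<Rightarrow> bool" where
  "is_K4 V E \<longleftrightarrow> card V = 4 \<and> E = {{u, v} | u v. u \<in> V \<and> v \<in> V \<and> u \<noteq> v}"

text \<open>Membership in the class \<G>: K4, or obtained from a disjoint union of copies of the
  marked templates (vertex partition P, copy X is the image of template ty X under the
  bijection emb X, M the set of marked vertices) by adding edges, each of which
  contains at most one marked vertex.\<close>
definition in_class_G :: "'a set \<Rightarrow> 'a set set \<Rightarrow> bool" where
  "in_class_G V E \<longleftrightarrow> is_K4 V E \<or>
    (\<exists>P M (ty :: 'a set \<Rightarrow> nat) (emb :: 'a set \<Rightarrow> nat \<Rightarrow> 'a).
       partition_on V P \<and>
       (\<forall>X\<in>P. ty X \<in> {0, 1, 2} \<and> bij_betw (emb X) (templ_V (ty X)) X \<and>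
              (\<forall>e\<in>templ_E (ty X). emb X ` e \<in> E) \<and>
              M \<inter> X = emb X ` templ_M (ty X)) \<and>
       (\<forall>e\<in>E. \<not> (\<exists>X\<in>P. \<exists>e'\<in>templ_E (ty X). e = emb X ` e') \<longrightarrow> card (e \<inter> M) \<le> 1))"

end

theory Submission
  imports Defs
begin

text \<open>
  A dissociation set D contains an independent set of at least half its size (one vertex per
  component of the induced subgraph), so diss \<le> 2 \<alpha> always. In a graph of the class the marked
  vertices form a dissociation set, and an independent set meets every template copy in at most
  half of its marked vertices, which gives equality.

  Conversely, let D be a maximum dissociation set of a graph with 2 \<alpha> = diss. Then D induces a
  perfect matching, and tightness yields an exchange bound: if X \<subseteq> D is a union of matched
  edges and W \<subseteq> V - D is independent with no vertex of W seeing both ends of a matched edge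
  outside X, then 2 |W| \<le> |X|. Applied to small configurations it shows that every vertex outside
  D is a common neighbour (a host) of the two ends of a matched edge, that an edge has at most two
  hosts, that two adjacent hosts force K4, and that the two hosts r1, r2 of an edge determine a
  satellite edge xy with r1 x and r2 y adjacent, which has no hosts itself and belongs to a
  single edge. Each matched edge that is not a satellite, together with its hosts and its
  satellite edge, is then a copy of K2, K3 or K4*, whose marked vertices are exactly those in D.\<close>

locale finite_simple_graph =
  fixes V :: "'a set" and E :: "'a set set"
  assumes simple: "simple_graph V E"
begin

lemma finite_V: "finite V"
  using simple by (simp add: simple_graph_def)

lemma adj_commute: "adj E u v = adj E v u"
  by (simp add: adj_def insert_commute)

lemma adjD: "adj E u v \<Longrightarrow> u \<in> V \<and> v \<in> V \<and> u \<noteq> v"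
  using simple unfolding adj_def simple_graph_def by (metis doubleton_eq_iff)

lemma finite_E: "finite E"
proof -
  have "E \<subseteq> Pow V" using simple unfolding simple_graph_def by fastforce
  thus ?thesis by (metis finite_V finite_Pow_iff finite_subset)
qed

lemma finite_neighbours: "finite {u. adj E u v}"
  using finite_V by (rule rev_finite_subset) (auto dest: adjD)

lemma finite_dissociation_set: "dissociation_set V E D \<Longrightarrow> finite D"
  using finite_V unfolding dissociation_set_def by (auto intro: finite_subset)

lemma independent_insert:
  assumes "independent_set V E S" "v \<in> V" "\<forall>u\<in>S. \<not> adj E u v"
  shows "independent_set V E (insert v S)"
  using assms unfolding independent_set_def by (auto simp: adj_commute dest: adjD)

lemma finite_card_independent: "finite (card ` {S. independent_set V E S})"
  by (rule finite_imageI, rule finite_subset[of _ "Pow V"])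
    (auto simp: independent_set_def finite_V)

lemma finite_card_dissociation: "finite (card ` {S. dissociation_set V E S})"
  by (rule finite_imageI, rule finite_subset[of _ "Pow V"])
    (auto simp: dissociation_set_def finite_V)

lemma card_le_alpha: "independent_set V E S \<Longrightarrow> card S \<le> alpha V E"
  unfolding alpha_def using finite_card_independent by simp

lemma card_le_diss: "dissociation_set V E S \<Longrightarrow> card S \<le> diss V E"
  unfolding diss_def using finite_card_dissociation by simp

lemma alpha_attained: obtains S where "independent_set V E S" "card S = alpha V E"
proof -
  have "independent_set V E {}" by (simp add: independent_set_def)
  hence "alpha V E \<in> card ` {S. independent_set V E S}"
    unfolding alpha_def using finite_card_independent by (intro Max_in) auto
  thus ?thesis using that by auto
qed

lemma diss_attained: obtains D where "dissociation_set V E D" "card D = diss V E"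
proof -
  have "dissociation_set V E {}" by (simp add: dissociation_set_def)
  hence "diss V E \<in> card ` {S. dissociation_set V E S}"
    unfolding diss_def using finite_card_dissociation by (intro Max_in) auto
  thus ?thesis using that by auto
qed

lemma dissociation_set_subset:
  assumes "dissociation_set V E D" "D' \<subseteq> D"
  shows "dissociation_set V E D'"
  unfolding dissociation_set_def
proof (intro conjI ballI)
  show "D' \<subseteq> V" using assms unfolding dissociation_set_def by blast
  fix v assume "v \<in> D'"
  have "finite D" using assms(1) by (rule finite_dissociation_set)
  hence "card {u \<in> D'. adj E u v} \<le> card {u \<in> D. adj E u v}"
    using assms(2) by (intro card_mono) auto
  thus "card {u \<in> D'. adj E u v} \<le> 1"
    using assms \<open>v \<in> D'\<close> unfolding dissociation_set_def by force
qed

lemma dissociation_set_at_most_one_neighbour: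
  assumes "dissociation_set V E D" "v \<in> D" "u \<in> D" "w \<in> D" "adj E u v" "adj E w v"
  shows "u = w"
proof (rule ccontr)
  assume "u \<noteq> w"
  have "finite D" using assms(1) by (rule finite_dissociation_set)
  hence "card {u, w} \<le> card {x \<in> D. adj E x v}" using assms by (intro card_mono) auto
  moreover have "card {x \<in> D. adj E x v} \<le> 1"
    using assms unfolding dissociation_set_def by blast
  ultimately show False using \<open>u \<noteq> w\<close> by simp
qed

lemma dissociation_set_half_independent:
  assumes "dissociation_set V E D"
  shows "\<exists>S\<subseteq>D. independent_set V E S \<and> card D \<le> 2 * card S"
  using assms
proof (induction "card D" arbitrary: D rule: less_induct)
  case less
  have finD: "finite D" using less.prems by (rule finite_dissociation_set)
  show ?case
  proof (cases "D = {}")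
    case True thus ?thesis by (auto simp: independent_set_def)
  next
    case False
    then obtain v where v: "v \<in> D" by blast
    obtain N where N: "v \<in> N" "N \<subseteq> D" "card N \<le> 2" "\<forall>u\<in>D - N. \<not> adj E u v"
    proof (cases "\<exists>u\<in>D. adj E u v")
      case True
      then obtain u where u: "u \<in> D" "adj E u v" by blast
      have "\<forall>w\<in>D - {u, v}. \<not> adj E w v"
        using dissociation_set_at_most_one_neighbour[OF less.prems v u(1)] u(2) by blast
      moreover have "card {u, v} \<le> 2" by (cases "u = v") auto
      ultimately show ?thesis using that[of "{u, v}"] u v by blast
    next
      case False
      thus ?thesis using that[of "{v}"] v by simp
    qed
    have "card (D - N) < card D" using finD N by (intro psubset_card_mono) auto
    moreover have "dissociation_set V E (D - N)"
      using less.prems by (rule dissociation_set_subset) blast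
    ultimately obtain S where S: "S \<subseteq> D - N" "independent_set V E S" "card (D - N) \<le> 2 * card S"
      using less.hyps by blast
    have "independent_set V E (insert v S)"
      using S N less.prems v by (intro independent_insert) (auto simp: dissociation_set_def)
    moreover have "card (insert v S) = card S + 1"
      using S N finD by (subst card_insert_disjoint) (auto intro: finite_subset)
    moreover have "card D = card (D - N) + card N"
      using finD N by (metis card_Diff_subset card_mono finite_subset le_add_diff_inverse2)
    ultimately show ?thesis using S N v by (intro exI[of _ "insert v S"]) auto
  qed
qed

lemma connected_closed_superset:
  assumes "connected_graph V E" "u \<in> V" "u \<in> C" "\<And>y z. y \<in> C \<Longrightarrow> adj E y z \<Longrightarrow> z \<in> C"
  shows "V \<subseteq> C"
proof
  fix v assume "v \<in> V"
  hence "(adj E)\<^sup>*\<^sup>* u v" using assms(1,2) unfolding connected_graph_def by blast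
  thus "v \<in> C"
  proof (induction rule: rtranclp_induct)
    case (step y z)
    thus ?case using assms(4) by blast
  qed (rule assms(3))
qed

lemma diss_le_twice_alpha: "diss V E \<le> 2 * alpha V E"
proof -
  obtain D where "dissociation_set V E D" "card D = diss V E" by (rule diss_attained)
  moreover obtain S where "independent_set V E S" "card D \<le> 2 * card S"
    using dissociation_set_half_independent[OF \<open>dissociation_set V E D\<close>] by blast
  ultimately show ?thesis using card_le_alpha by force
qed

end

lemma card_eq_sum_partition:
  assumes "partition_on V P" "finite V" "A \<subseteq> V"
  shows "card A = (\<Sum>X\<in>P. card (A \<inter> X))"
proof -
  have "finite P" using assms(1,2) partition_onD1 by (metis finite_UnionD)
  moreover have "A = (\<Union>X\<in>P. A \<inter> X)" using assms(3) partition_onD1[OF assms(1)] by blast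
  moreover have "\<forall>X\<in>P. \<forall>Y\<in>P. X \<noteq> Y \<longrightarrow> A \<inter> X \<inter> (A \<inter> Y) = {}"
    using partition_onD2[OF assms(1)] unfolding disjoint_def disjnt_def by blast
  ultimately show ?thesis using assms(2,3) by (metis card_UN_disjoint finite_Int finite_subset)
qed

lemma templ_E_doubleton: "e \<in> templ_E t \<Longrightarrow> \<exists>i j. e = {i, j} \<and> i \<noteq> j"
proof -
  assume "e \<in> templ_E t"
  hence "card e = 2" by (auto simp: templ_E_def split: if_splits)
  thus ?thesis by (metis card_2_iff)
qed

lemma templ_E_subset: "t \<in> {0, 1, 2} \<Longrightarrow> e \<in> templ_E t \<Longrightarrow> e \<subseteq> templ_V t"
  by (auto simp: templ_E_def templ_V_def)

lemma templ_M_subset: "t \<in> {0, 1, 2} \<Longrightarrow> templ_M t \<subseteq> templ_V t"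
  by (auto simp: templ_M_def templ_V_def)

lemma card_templ_M: "t \<in> {0, 1, 2} \<Longrightarrow> card (templ_M t) = (if t = 2 then 4 else 2)"
  by (auto simp: templ_M_def)

lemma templ_E_marked_matching:
  "t \<in> {0, 1, 2} \<Longrightarrow> {i, j} \<in> templ_E t \<Longrightarrow> {i, k} \<in> templ_E t \<Longrightarrow>
    i \<in> templ_M t \<Longrightarrow> j \<in> templ_M t \<Longrightarrow> k \<in> templ_M t \<Longrightarrow> i \<noteq> j \<Longrightarrow> i \<noteq> k \<Longrightarrow> j = k"
  by (auto simp: templ_E_def templ_M_def doubleton_eq_iff)

lemma template_independent_half:
  assumes t: "t \<in> {0, 1, 2}" and I: "I \<subseteq> templ_V t" "\<forall>i\<in>I. \<forall>j\<in>I. {i, j} \<notin> templ_E t"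
  shows "2 * card I \<le> card (templ_M t)"
proof (cases "t = 2")
  case True
  have "card I \<le> 2"
  proof (rule ccontr)
    assume "\<not> card I \<le> 2"
    hence "3 \<le> card I" by linarith
    then obtain T where "T \<subseteq> I" "card T = 3" by (rule obtain_subset_with_card_n)
    then obtain i j k where "{i, j, k} \<subseteq> I" "i \<noteq> j" "j \<noteq> k" "i \<noteq> k" by (metis card_3_iff)
    moreover have "{i, j} \<in> templ_E 2 \<or> {j, k} \<in> templ_E 2 \<or> {i, k} \<in> templ_E 2"
      if "i \<in> templ_V 2" "j \<in> templ_V 2" "k \<in> templ_V 2" "i \<noteq> j" "j \<noteq> k" "i \<noteq> k"
      using that unfolding templ_V_def templ_E_def by (simp add: doubleton_eq_iff) (elim disjE; simp)
    ultimately show False using I True by blast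
  qed
  thus ?thesis using True by (simp add: card_templ_M)
next
  case False
  have "{i, j} \<in> templ_E t" if "i \<in> templ_V t" "j \<in> templ_V t" "i \<noteq> j" for i j
    using that t False by (auto simp: templ_E_def templ_V_def insert_commute)
  hence "\<forall>i\<in>I. \<forall>j\<in>I. i = j" using I by blast
  moreover have "finite I" using I(1) by (rule finite_subset) (simp add: templ_V_def)
  ultimately have "card I \<le> 1" by (simp add: card_le_Suc0_iff_eq)
  thus ?thesis using t False by (simp add: card_templ_M)
qed

context finite_simple_graph
begin

lemma K4_twice_alpha_le_diss:
  assumes "is_K4 V E"
  shows "2 * alpha V E \<le> diss V E"
proof -
  have card_V: "card V = 4" and adj_all: "\<And>a b. a \<in> V \<Longrightarrow> b \<in> V \<Longrightarrow> a \<noteq> b \<Longrightarrow> adj E a b"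
    using assms unfolding is_K4_def adj_def by blast+
  obtain S where S: "independent_set V E S" "card S = alpha V E" by (rule alpha_attained)
  have "finite S" using S finite_V finite_subset unfolding independent_set_def by blast
  moreover have "\<forall>a\<in>S. \<forall>b\<in>S. a = b" using S adj_all unfolding independent_set_def by blast
  ultimately have "alpha V E \<le> 1" using S(2) card_le_Suc0_iff_eq by fastforce
  moreover have "2 \<le> diss V E"
  proof -
    have "2 \<le> card V" using card_V by simp
    then obtain T where T: "T \<subseteq> V" "card T = 2" by (rule obtain_subset_with_card_n)
    then obtain a b where ab: "T = {a, b}" "a \<noteq> b" by (metis card_2_iff)
    have "card {u \<in> T. adj E u v} \<le> 1" if "v \<in> T" for v
    proof -
      have "{u \<in> T. adj E u v} \<subseteq> T - {v}" using adjD by blast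
      moreover have "card (T - {v}) = 1" using ab that by auto
      ultimately show ?thesis using ab by (metis card_mono finite_Diff finite.intros)
    qed
    hence "dissociation_set V E T" unfolding dissociation_set_def using T(1) by blast
    thus ?thesis using card_le_diss T(2) by fastforce
  qed
  ultimately show ?thesis by linarith
qed

end

locale template_decomposition = finite_simple_graph +
  fixes P :: "'a set set" and M :: "'a set"
    and ty :: "'a set \<Rightarrow> nat" and emb :: "'a set \<Rightarrow> nat \<Rightarrow> 'a"
  assumes partition: "partition_on V P"
    and copy: "X \<in> P \<Longrightarrow> ty X \<in> {0, 1, 2} \<and> bij_betw (emb X) (templ_V (ty X)) X \<and>
      (\<forall>e\<in>templ_E (ty X). emb X ` e \<in> E) \<and> M \<inter> X = emb X ` templ_M (ty X)"
    and added_edge: "e \<in> E \<Longrightarrow> \<not> (\<exists>X\<in>P. \<exists>e'\<in>templ_E (ty X). e = emb X ` e') \<Longrightarrow> card (e \<inter> M) \<le> 1"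
begin

lemma
  assumes "X \<in> P"
  shows copy_type: "ty X \<in> {0, 1, 2}"
    and copy_bij: "bij_betw (emb X) (templ_V (ty X)) X"
    and copy_edges: "e \<in> templ_E (ty X) \<Longrightarrow> emb X ` e \<in> E"
    and copy_marked: "M \<inter> X = emb X ` templ_M (ty X)"
  using copy[OF assms] by blast+

lemma copy_subset: "X \<in> P \<Longrightarrow> X \<subseteq> V"
  using partition_onD1[OF partition] by blast

lemma copy_unique: "X \<in> P \<Longrightarrow> Y \<in> P \<Longrightarrow> v \<in> X \<Longrightarrow> v \<in> Y \<Longrightarrow> X = Y"
  using partition_onD2[OF partition] unfolding disjoint_def disjnt_def by blast

lemma template_edge_adj: "X \<in> P \<Longrightarrow> {i, j} \<in> templ_E (ty X) \<Longrightarrow> adj E (emb X i) (emb X j)"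
  using copy_edges unfolding adj_def by fastforce

lemma emb_marked_iff:
  assumes "X \<in> P" "i \<in> templ_V (ty X)"
  shows "emb X i \<in> M \<longleftrightarrow> i \<in> templ_M (ty X)"
proof -
  note t = copy_type[OF assms(1)] and bij = copy_bij[OF assms(1)] and M = copy_marked[OF assms(1)]
  have "emb X i \<in> X" using bij assms(2) by (rule bij_betw_apply)
  thus ?thesis using M templ_M_subset[OF t] bij_betw_imp_inj_on[OF bij] assms(2)
    by (auto dest: inj_onD)
qed

text \<open>An edge with two marked ends cannot be an added edge.\<close>
lemma marked_adj_template_edge:
  assumes u: "u \<in> M \<inter> V" and v: "v \<in> M \<inter> V" and "adj E u v"
  obtains X i j where "X \<in> P" "{i, j} \<in> templ_E (ty X)" "i \<in> templ_M (ty X)" "j \<in> templ_M (ty X)"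
    "i \<noteq> j" "emb X i = v" "emb X j = u"
proof -
  have "{u, v} \<in> E" "u \<noteq> v" using \<open>adj E u v\<close> adjD unfolding adj_def by auto
  moreover from this have "card ({u, v} \<inter> M) = 2" using u v by (simp add: Int_insert_left)
  ultimately obtain X e' where X: "X \<in> P" "e' \<in> templ_E (ty X)" "{u, v} = emb X ` e'"
    using added_edge by fastforce
  obtain i j where ij: "e' = {i, j}" "i \<noteq> j" using templ_E_doubleton X(2) by blast
  have ij_V: "i \<in> templ_V (ty X)" "j \<in> templ_V (ty X)"
    using templ_E_subset copy X(1,2) ij by blast+
  have "(emb X i = v \<and> emb X j = u) \<or> (emb X i = u \<and> emb X j = v)"
    using X(3) ij \<open>u \<noteq> v\<close> by (auto simp: doubleton_eq_iff)
  thus ?thesis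
    using that[of X i j] that[of X j i] X ij ij_V emb_marked_iff u v by (auto simp: insert_commute)
qed

lemma marked_dissociation_set: "dissociation_set V E (M \<inter> V)"
  unfolding dissociation_set_def
proof (intro conjI ballI)
  fix v assume v: "v \<in> M \<inter> V"
  have uniq: "u = u'" if u: "u \<in> M \<inter> V" "adj E u v" and u': "u' \<in> M \<inter> V" "adj E u' v" for u u'
  proof -
    obtain X i j where X: "X \<in> P" "{i, j} \<in> templ_E (ty X)" "i \<in> templ_M (ty X)"
      "j \<in> templ_M (ty X)" "i \<noteq> j" "emb X i = v" "emb X j = u"
      using marked_adj_template_edge[OF u(1) v u(2)] .
    obtain X' i' j' where X': "X' \<in> P" "{i', j'} \<in> templ_E (ty X')" "i' \<in> templ_M (ty X')"
      "j' \<in> templ_M (ty X')" "i' \<noteq> j'" "emb X' i' = v" "emb X' j' = u'"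
      using marked_adj_template_edge[OF u'(1) v u'(2)] .
    have V: "i \<in> templ_V (ty X)" "i' \<in> templ_V (ty X')"
      using X(3) X'(3) templ_M_subset[OF copy_type[OF X(1)]] templ_M_subset[OF copy_type[OF X'(1)]]
      by blast+
    have "v \<in> X" "v \<in> X'"
      using bij_betw_apply[OF copy_bij[OF X(1)] V(1)] bij_betw_apply[OF copy_bij[OF X'(1)] V(2)]
        X(6) X'(6) by simp_all
    hence XX': "X' = X" using copy_unique X(1) X'(1) by blast
    have "i' = i"
      using X(6) X'(6) V XX' bij_betw_imp_inj_on[OF copy_bij[OF X(1)]] by (auto dest: inj_onD)
    hence "j' = j"
      using templ_E_marked_matching[OF copy_type[OF X(1)], of i j j'] X X' XX' by simp
    thus "u = u'" using X(7) X'(7) XX' by simp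
  qed
  have "finite {u \<in> M \<inter> V. adj E u v}" using finite_V by simp
  hence "card {u \<in> M \<inter> V. adj E u v} \<le> Suc 0"
    using uniq by (subst card_le_Suc0_iff_eq) auto
  thus "card {u \<in> M \<inter> V. adj E u v} \<le> 1" by simp
qed simp

lemma independent_copy_half:
  assumes I: "independent_set V E I" and X: "X \<in> P"
  shows "2 * card (I \<inter> X) \<le> card (M \<inter> V \<inter> X)"
proof -
  let ?t = "ty X"
  let ?J = "{i \<in> templ_V ?t. emb X i \<in> I}"
  note t = copy_type[OF X] and bij = copy_bij[OF X]
  have inj: "inj_on (emb X) (templ_V ?t)" using bij by (rule bij_betw_imp_inj_on)
  have surj: "emb X ` templ_V ?t = X" using bij by (rule bij_betw_imp_surj_on)
  have "I \<inter> X = emb X ` ?J"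
  proof (intro equalityI subsetI)
    fix a assume a: "a \<in> I \<inter> X"
    hence "a \<in> emb X ` templ_V ?t" using surj by simp
    thus "a \<in> emb X ` ?J" using a by blast
  next
    fix a assume "a \<in> emb X ` ?J"
    thus "a \<in> I \<inter> X" using surj by blast
  qed
  hence "card (I \<inter> X) = card ?J" using inj by (simp add: card_image inj_on_subset)
  moreover have "M \<inter> V \<inter> X = emb X ` templ_M ?t"
    using copy_marked[OF X] copy_subset[OF X] by blast
  hence "card (M \<inter> V \<inter> X) = card (templ_M ?t)"
    using inj templ_M_subset[OF t] by (simp add: card_image inj_on_subset)
  moreover have "{i, j} \<notin> templ_E ?t" if "i \<in> ?J" "j \<in> ?J" for i j
    using template_edge_adj[OF X, of i j] I that unfolding independent_set_def by blast
  ultimately show ?thesis using template_independent_half[OF t, of ?J] by auto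
qed

lemma twice_alpha_le_diss: "2 * alpha V E \<le> diss V E"
proof -
  obtain I where I: "independent_set V E I" "card I = alpha V E" by (rule alpha_attained)
  have "I \<subseteq> V" using I(1) unfolding independent_set_def by blast
  hence "2 * card I = (\<Sum>X\<in>P. 2 * card (I \<inter> X))"
    using card_eq_sum_partition[OF partition finite_V] by (simp add: sum_distrib_left)
  also have "\<dots> \<le> (\<Sum>X\<in>P. card (M \<inter> V \<inter> X))"
    using independent_copy_half[OF I(1)] by (rule sum_mono)
  also have "\<dots> = card (M \<inter> V)"
    using card_eq_sum_partition[OF partition finite_V, of "M \<inter> V"] by simp
  also have "\<dots> \<le> diss V E" using card_le_diss marked_dissociation_set by blast
  finally show ?thesis using I(2) by simp
qed

end

lemma (in finite_simple_graph) in_class_G_twice_alpha_le_diss: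
  assumes "in_class_G V E"
  shows "2 * alpha V E \<le> diss V E"
  using assms unfolding in_class_G_def
proof (elim disjE exE conjE)
  fix P M ty emb
  assume "partition_on V P"
    "\<forall>X\<in>P. ty X \<in> {0, 1, 2} \<and> bij_betw (emb X) (templ_V (ty X)) X \<and>
      (\<forall>e\<in>templ_E (ty X). emb X ` e \<in> E) \<and> M \<inter> X = emb X ` templ_M (ty X)"
    "\<forall>e\<in>E. \<not> (\<exists>X\<in>P. \<exists>e'\<in>templ_E (ty X). e = emb X ` e') \<longrightarrow> card (e \<inter> M) \<le> 1"
  hence "template_decomposition V E P M ty emb"
    by unfold_locales blast+
  thus ?thesis by (rule template_decomposition.twice_alpha_le_diss)
qed (rule K4_twice_alpha_le_diss)

locale subcubic_graph = finite_simple_graph +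
  assumes subcubic: "subcubic V E"
begin

lemma card_neighbours_le_3: "card {u. adj E u v} \<le> 3"
proof (cases "v \<in> V")
  case False
  hence "{u. adj E u v} = {}" using adjD by blast
  thus ?thesis by simp
next
  case True
  have "inj_on (\<lambda>u. {u, v}) {u. adj E u v}"
    by (rule inj_onI) (auto simp: doubleton_eq_iff dest: adjD)
  moreover have "(\<lambda>u. {u, v}) ` {u. adj E u v} \<subseteq> {e\<in>E. v \<in> e}"
    by (auto simp: adj_def)
  ultimately have "card {u. adj E u v} \<le> degree E v"
    unfolding degree_def using finite_E by (intro card_inj_on_le) auto
  also have "\<dots> \<le> 3" using subcubic True unfolding subcubic_def by blast
  finally show ?thesis .
qed

lemma no_four_neighbours:
  assumes "adj E v a" "adj E v b" "adj E v c" "adj E v d" "distinct [a, b, c, d]"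
  shows False
proof -
  have "card {a, b, c, d} \<le> card {u. adj E u v}"
    using assms by (intro card_mono finite_neighbours) (auto simp: adj_commute)
  thus False using card_neighbours_le_3[of v] assms(5) by simp
qed

lemma neighbours_of_three:
  "adj E v a \<Longrightarrow> adj E v b \<Longrightarrow> adj E v c \<Longrightarrow> distinct [a, b, c] \<Longrightarrow> adj E v x \<Longrightarrow>
    x = a \<or> x = b \<or> x = c"
  using no_four_neighbours[of v a b c x] by auto

end

locale tight_graph = subcubic_graph +
  fixes D :: "'a set"
  assumes D_dissociation: "dissociation_set V E D" and card_D: "card D = diss V E"
    and tight: "2 * alpha V E = diss V E"
begin

lemma D_subset: "D \<subseteq> V"
  using D_dissociation unfolding dissociation_set_def by blast

lemma finite_D: "finite D"
  using D_subset finite_V by (rule finite_subset)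

lemma independent_card_le: "independent_set V E S \<Longrightarrow> 2 * card S \<le> card D"
  using card_le_alpha tight card_D by fastforce

lemma neighbour_in_D: "v \<in> D \<Longrightarrow> \<exists>u\<in>D. adj E u v"
proof (rule ccontr)
  assume v: "v \<in> D" and none: "\<not> (\<exists>u\<in>D. adj E u v)"
  have "dissociation_set V E (D - {v})" using D_dissociation by (rule dissociation_set_subset) blast
  then obtain S where S: "S \<subseteq> D - {v}" "independent_set V E S" "card (D - {v}) \<le> 2 * card S"
    using dissociation_set_half_independent by blast
  have "independent_set V E (insert v S)"
    using S none v D_subset by (intro independent_insert) auto
  hence "2 * card (insert v S) \<le> card D" by (rule independent_card_le)
  moreover have "card (insert v S) = card S + 1"
    using S(1) finite_D by (subst card_insert_disjoint) (auto intro: finite_subset)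
  moreover have "card (D - {v}) + 1 = card D" using finite_D v card_Suc_Diff1 by fastforce
  ultimately show False using S(3) by linarith
qed

definition partner :: "'a \<Rightarrow> 'a" where
  "partner v = (THE u. u \<in> D \<and> adj E u v)"

lemma partner: "v \<in> D \<Longrightarrow> partner v \<in> D \<and> adj E (partner v) v"
proof -
  assume v: "v \<in> D"
  then obtain u where "u \<in> D" "adj E u v" using neighbour_in_D by blast
  hence "\<exists>!u. u \<in> D \<and> adj E u v"
    using dissociation_set_at_most_one_neighbour[OF D_dissociation v] by blast
  thus ?thesis unfolding partner_def by (rule theI')
qed

lemma partner_in_D: "v \<in> D \<Longrightarrow> partner v \<in> D"
  using partner by blast

lemma adj_partner: "v \<in> D \<Longrightarrow> adj E (partner v) v"
  using partner by blast

lemma partner_unique: "v \<in> D \<Longrightarrow> u \<in> D \<Longrightarrow> adj E u v \<Longrightarrow> u = partner v"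
  using partner dissociation_set_at_most_one_neighbour[OF D_dissociation] by blast

lemma partner_partner: "v \<in> D \<Longrightarrow> partner (partner v) = v"
  using partner_unique[of "partner v" v] partner adj_commute by metis

lemma partner_neq: "v \<in> D \<Longrightarrow> partner v \<noteq> v"
  using adj_partner adjD by blast

lemma partner_eq_iff: "v \<in> D \<Longrightarrow> w \<in> D \<Longrightarrow> partner v = partner w \<longleftrightarrow> v = w"
  using partner_partner by metis

definition matched_edge :: "'a \<Rightarrow> 'a set" where
  "matched_edge u = {u, partner u}"

lemma matched_edge_partner: "u \<in> D \<Longrightarrow> matched_edge (partner u) = matched_edge u"
  unfolding matched_edge_def using partner_partner by auto

lemma matched_edge_subset: "u \<in> D \<Longrightarrow> matched_edge u \<subseteq> D"
  unfolding matched_edge_def using partner_in_D by auto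

lemma card_matched_edge: "u \<in> D \<Longrightarrow> card (matched_edge u) = 2"
  using partner_neq[of u] unfolding matched_edge_def by auto

lemma matched_edge_eq:
  assumes "u \<in> D" "w \<in> matched_edge u"
  shows "matched_edge w = matched_edge u"
proof -
  have "w = u \<or> w = partner u" using assms(2) unfolding matched_edge_def by blast
  thus ?thesis using matched_edge_partner[OF assms(1)] by blast
qed

lemma finite_matched_edge: "finite (matched_edge u)"
  unfolding matched_edge_def by simp

lemma self_in_matched_edge: "u \<in> matched_edge u"
  unfolding matched_edge_def by blast

lemma partner_notin_matched_edge:
  assumes "a \<in> D" "u \<in> D" "a \<notin> matched_edge u"
  shows "partner a \<notin> matched_edge u"
proof
  assume "partner a \<in> matched_edge u"
  hence "matched_edge a = matched_edge u"
    using matched_edge_eq[OF assms(2)] matched_edge_partner[OF assms(1)] by simp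
  thus False using assms(3) self_in_matched_edge by metis
qed

lemma partner_in_matched_edge: "u \<in> D \<Longrightarrow> a \<in> matched_edge u \<Longrightarrow> partner a \<in> matched_edge u"
  using matched_edge_eq[of u a] unfolding matched_edge_def by auto

lemma distinct_matched_edges:
  assumes "u \<in> D" "a \<in> D" "a \<notin> matched_edge u"
  shows "distinct [u, partner u, a, partner a]"
  using assms partner_notin_matched_edge[OF assms(2,1,3)] partner_neq[OF assms(1)] partner_neq[OF assms(2)]
  unfolding matched_edge_def by auto

lemma matched_edge_disjoint:
  assumes "u \<in> D" "x \<in> D" "x \<notin> matched_edge u"
  shows "matched_edge x \<inter> matched_edge u = {}"
  using assms partner_notin_matched_edge unfolding matched_edge_def by blast

lemma card_Un_matched_edge:
  assumes "x \<in> D" "finite Y" "matched_edge x \<inter> Y = {}"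
  shows "card (Y \<union> matched_edge x) = card Y + 2"
  using card_Un_disjoint[OF assms(2) finite_matched_edge] assms card_matched_edge
  by (simp add: Int_commute)

lemma partner_closed_half_independent:
  assumes D0: "D0 \<subseteq> D" "\<forall>a\<in>D0. partner a \<in> D0" and F: "\<forall>a\<in>D0. a \<in> F \<longrightarrow> partner a \<notin> F"
  shows "\<exists>S \<subseteq> D0 - F. independent_set V E S \<and> card D0 = 2 * card S"
proof -
  let ?Q = "matched_edge ` D0"
  have D0_Q: "\<Union> ?Q = D0" using D0 unfolding matched_edge_def by blast
  have Q_eq: "e = matched_edge a" if "e \<in> ?Q" "a \<in> e" for e a
    using that D0(1) matched_edge_eq by blast
  have "2 * card ?Q = card (\<Union> ?Q)"
  proof (rule card_partition)
    show "finite ?Q" "finite (\<Union> ?Q)" using finite_D D0 D0_Q by (auto intro: finite_subset)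
    show "card e = 2" if "e \<in> ?Q" for e using that D0(1) card_matched_edge by blast
    show "e \<inter> e' = {}" if "e \<in> ?Q" "e' \<in> ?Q" "e \<noteq> e'" for e e' using that Q_eq by blast
  qed
  define f where "f e = (SOME a. a \<in> e - F)" for e
  have f: "f e \<in> e - F" if e: "e \<in> ?Q" for e
  proof -
    obtain a where "a \<in> D0" "e = {a, partner a}" using e unfolding matched_edge_def by blast
    hence "\<exists>a. a \<in> e - F" using F by blast
    thus ?thesis unfolding f_def by (rule someI_ex)
  qed
  have inj: "inj_on f ?Q" using f Q_eq by (intro inj_onI) (metis Diff_iff)
  have non_adj: "\<not> adj E (f e) (f e')" if e: "e \<in> ?Q" "e' \<in> ?Q" for e e'
  proof
    assume a: "adj E (f e) (f e')"
    have in_D: "f e \<in> D" "f e' \<in> D" using f e D0_Q D0(1) by blast+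
    hence "f e = partner (f e')" using a partner_unique by blast
    hence "f e \<in> matched_edge (f e')" unfolding matched_edge_def by blast
    hence "e = e'" using Q_eq e f by (metis Diff_iff)
    thus False using a adjD by blast
  qed
  have sub: "f ` ?Q \<subseteq> D0 - F" using f D0_Q by blast
  hence "independent_set V E (f ` ?Q)"
    unfolding independent_set_def using D0(1) D_subset non_adj by blast
  moreover have "card D0 = 2 * card (f ` ?Q)"
    using \<open>2 * card ?Q = card (\<Union> ?Q)\<close> D0_Q card_image[OF inj] by simp
  ultimately show ?thesis using sub by blast
qed

lemma partner_closed_Diff:
  assumes "X \<subseteq> D" "\<forall>a\<in>X. partner a \<in> X"
  shows "\<forall>a\<in>D - X. partner a \<in> D - X"
  using assms partner_partner partner_in_D by (metis DiffD1 DiffD2 DiffI)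

text \<open>
  Every matched edge outside X has an endpoint not adjacent to W; these endpoints
  together with W form an independent set, so tightness bounds W by X.\<close>
lemma exchange_bound:
  assumes X: "X \<subseteq> D" "\<forall>a\<in>X. partner a \<in> X"
    and W: "W \<subseteq> V - D" "\<forall>a\<in>W. \<forall>b\<in>W. \<not> adj E a b"
    and outside: "\<forall>a\<in>D - X. \<not> ((\<exists>w\<in>W. adj E w a) \<and> (\<exists>w\<in>W. adj E w (partner a)))"
  shows "2 * card W \<le> card X"
proof -
  let ?F = "{a. \<exists>w\<in>W. adj E w a}"
  obtain S where S: "S \<subseteq> D - X - ?F" "independent_set V E S" "card (D - X) = 2 * card S"
    using partner_closed_half_independent[of "D - X" ?F] partner_closed_Diff[OF X] outside by blast
  have "independent_set V E (S \<union> W)"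
    using S(1,2) W adj_commute unfolding independent_set_def by blast
  hence "2 * card (S \<union> W) \<le> card D" by (rule independent_card_le)
  moreover have "card (S \<union> W) = card S + card W"
    using S(1) W(1) finite_D finite_V by (intro card_Un_disjoint) (auto intro: finite_subset)
  moreover have "card D = card (D - X) + card X"
    using finite_D X(1) by (metis card_Diff_subset card_mono finite_subset le_add_diff_inverse2)
  ultimately show ?thesis using S(3) by linarith
qed

lemma exchange_bound_neighbourhood:
  assumes X: "X \<subseteq> D" "\<forall>a\<in>X. partner a \<in> X"
    and W: "W \<subseteq> V - D" "\<forall>w\<in>W. \<forall>z. adj E w z \<longrightarrow> z \<in> X"
  shows "2 * card W \<le> card X"
  using X W by (intro exchange_bound) blast+

definition hosts :: "'a \<Rightarrow> 'a set" where
  "hosts u = {r \<in> V - D. adj E r u \<and> adj E r (partner u)}"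

lemma hostsD: "r \<in> hosts u \<Longrightarrow> r \<in> V \<and> r \<notin> D \<and> adj E r u \<and> adj E r (partner u)"
  unfolding hosts_def by blast

lemma hosts_partner: "u \<in> D \<Longrightarrow> hosts (partner u) = hosts u"
  unfolding hosts_def using partner_partner by auto

lemma outside_vertex_hosted:
  assumes "r \<in> V - D"
  shows "\<exists>u\<in>D. r \<in> hosts u"
proof (rule ccontr)
  assume "\<not> (\<exists>u\<in>D. r \<in> hosts u)"
  hence "2 * card {r} \<le> card {}"
    using assms adjD exchange_bound[of "{}" "{r}"] by (auto simp: hosts_def)
  thus False by simp
qed

lemma host_unique:
  assumes "u \<in> D" "w \<in> D" "r \<in> hosts u" "r \<in> hosts w"
  shows "w \<in> matched_edge u"
proof (rule ccontr)
  assume "w \<notin> matched_edge u"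
  hence "distinct [u, partner u, w, partner w]" using distinct_matched_edges assms(1,2) by blast
  thus False using no_four_neighbours[of r u "partner u" w "partner w"] assms hostsD adj_commute by metis
qed

lemma finite_hosts: "finite (hosts u)"
  unfolding hosts_def using finite_V by simp

lemma card_hosts_le_2:
  assumes u: "u \<in> D"
  shows "card (hosts u) \<le> 2"
proof -
  have sub: "hosts u \<subseteq> {x. adj E x u} - {partner u}"
    using u partner_in_D unfolding hosts_def by blast
  hence "card (hosts u) \<le> card ({x. adj E x u} - {partner u})"
    using finite_neighbours by (intro card_mono) auto
  moreover have "card ({x. adj E x u} - {partner u}) = card {x. adj E x u} - 1"
    using adj_partner u finite_neighbours by simp
  ultimately show ?thesis using card_neighbours_le_3[of u] by linarith
qed

text \<open>Two adjacent hosts of an edge use up all degrees of the four vertices involved.\<close>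
lemma adjacent_hosts_K4:
  assumes conn: "connected_graph V E" and u: "u \<in> D"
    and r: "r1 \<in> hosts u" "r2 \<in> hosts u" "adj E r1 r2"
  shows "is_K4 V E"
proof -
  let ?C = "{u, partner u, r1, r2}"
  have pu: "partner u \<in> D" "adj E u (partner u)" using u partner_in_D adj_partner adj_commute by blast+
  have h: "adj E r1 u" "adj E r1 (partner u)" "adj E r2 u" "adj E r2 (partner u)" "r1 \<notin> D" "r2 \<notin> D"
    using r hostsD by auto
  hence all_adj: "adj E x y" if "x \<in> ?C" "y \<in> ?C" "x \<noteq> y" for x y
    using that pu r(3) adj_commute by auto
  have distinct: "distinct [u, partner u, r1, r2]" using h pu u r(3) adjD by auto
  have closed: "z \<in> ?C" if "y \<in> ?C" "adj E y z" for y z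
    using that(1)
  proof (elim insertE emptyE)
    assume "y = u"
    thus ?thesis using neighbours_of_three[of u "partner u" r1 r2 z] that all_adj distinct by auto
  next
    assume "y = partner u"
    thus ?thesis using neighbours_of_three[of y u r1 r2 z] that all_adj distinct by auto
  next
    assume "y = r1"
    thus ?thesis using neighbours_of_three[of y u "partner u" r2 z] that all_adj distinct by auto
  next
    assume "y = r2"
    thus ?thesis using neighbours_of_three[of y u "partner u" r1 z] that all_adj distinct by auto
  qed
  have "u \<in> V" using u D_subset by blast
  hence "V \<subseteq> ?C" using connected_closed_superset[OF conn _ _ closed] by simp
  moreover have "?C \<subseteq> V" using h r u pu D_subset hostsD by blast
  ultimately have V: "V = ?C" by blast
  have "E = {{x, y} | x y. x \<in> V \<and> y \<in> V \<and> x \<noteq> y}"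
    using simple all_adj V unfolding simple_graph_def adj_def by blast
  thus ?thesis using V distinct unfolding is_K4_def by simp
qed

end

locale tight_connected_graph = tight_graph +
  assumes connected: "connected_graph V E" and not_K4: "\<not> is_K4 V E"
begin

lemma hosts_nonadjacent: "u \<in> D \<Longrightarrow> r1 \<in> hosts u \<Longrightarrow> r2 \<in> hosts u \<Longrightarrow> \<not> adj E r1 r2"
  using adjacent_hosts_K4 connected not_K4 by blast

lemma two_hosts_satellite:
  assumes u: "u \<in> D" and r: "r1 \<in> hosts u" "r2 \<in> hosts u" "r1 \<noteq> r2"
  shows "\<exists>x\<in>D. x \<notin> matched_edge u \<and> adj E r1 x \<and> adj E r2 (partner x)"
proof (rule ccontr)
  assume none: "\<not> ?thesis"
  have "\<not> ((\<exists>w\<in>{r1, r2}. adj E w a) \<and> (\<exists>w\<in>{r1, r2}. adj E w (partner a)))"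
    if a: "a \<in> D - matched_edge u" for a
  proof
    assume "(\<exists>w\<in>{r1, r2}. adj E w a) \<and> (\<exists>w\<in>{r1, r2}. adj E w (partner a))"
    then obtain w w' where w: "w \<in> {r1, r2}" "w' \<in> {r1, r2}" "adj E w a" "adj E w' (partner a)"
      by blast
    have pa: "partner a \<in> D" "partner a \<notin> matched_edge u"
      using a u partner_in_D partner_notin_matched_edge by auto
    show False
    proof (cases "w = w'")
      case True
      have "distinct [u, partner u, a, partner a]" using a u distinct_matched_edges by blast
      thus False using no_four_neighbours[of w u "partner u" a "partner a"] w True r hostsD by blast
    next
      case False
      hence "(w = r1 \<and> w' = r2) \<or> (w = r2 \<and> w' = r1)" using w by blast
      thus False using none a pa w partner_partner by auto
    qed
  qed
  hence "2 * card {r1, r2} \<le> card (matched_edge u)"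
    using u r hostsD hosts_nonadjacent adjD
    by (intro exchange_bound matched_edge_subset partner_in_matched_edge ballI) blast+
  thus False using card_matched_edge u r(3) by simp
qed

definition satellites :: "'a \<Rightarrow> 'a set" where
  "satellites u = {v \<in> D. v \<notin> matched_edge u \<and> card (hosts u) = 2 \<and>
     (\<exists>r\<in>hosts u. adj E r v \<or> adj E r (partner v))}"

lemma satellites_subset: "satellites u \<subseteq> D"
  unfolding satellites_def by blast

lemma two_hosts_configuration:
  assumes u: "u \<in> D" and two: "card (hosts u) = 2"
  obtains r1 r2 x where "hosts u = {r1, r2}" "r1 \<noteq> r2" "x \<in> D" "x \<notin> matched_edge u"
    "adj E r1 x" "adj E r2 (partner x)"
    "\<And>z. adj E r1 z \<Longrightarrow> z \<in> matched_edge u \<union> {x}"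
    "\<And>z. adj E r2 z \<Longrightarrow> z \<in> matched_edge u \<union> {partner x}"
    "satellites u = matched_edge x"
proof -
  obtain r1 r2 where r: "hosts u = {r1, r2}" "r1 \<noteq> r2" using two by (metis card_2_iff)
  hence r12: "r1 \<in> hosts u" "r2 \<in> hosts u" by auto
  obtain x where x: "x \<in> D" "x \<notin> matched_edge u" "adj E r1 x" "adj E r2 (partner x)"
    using two_hosts_satellite[OF u r12 r(2)] by blast
  have px: "partner x \<in> D" "partner x \<notin> matched_edge u" "partner x \<noteq> x"
    using x u partner_in_D partner_neq partner_notin_matched_edge by auto
  have h: "adj E r1 u" "adj E r1 (partner u)" "adj E r2 u" "adj E r2 (partner u)"
    using r12 hostsD by auto
  have d: "distinct [u, partner u, x]" "distinct [u, partner u, partner x]"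
    using distinct_matched_edges[OF u x(1,2)] by auto
  have n1: "z \<in> matched_edge u \<union> {x}" if "adj E r1 z" for z
    using neighbours_of_three[OF h(1,2) x(3) d(1) that] unfolding matched_edge_def by blast
  have n2: "z \<in> matched_edge u \<union> {partner x}" if "adj E r2 z" for z
    using neighbours_of_three[OF h(3,4) x(4) d(2) that] unfolding matched_edge_def by blast
  have "satellites u = matched_edge x"
  proof
    show "matched_edge x \<subseteq> satellites u"
      using x px two r12 partner_partner unfolding satellites_def matched_edge_def by auto
    show "satellites u \<subseteq> matched_edge x"
    proof
      fix v assume v: "v \<in> satellites u"
      hence v_D: "v \<in> D" "v \<notin> matched_edge u" "partner v \<notin> matched_edge u"
        using partner_notin_matched_edge u unfolding satellites_def by auto
      obtain r where "r \<in> hosts u" "adj E r v \<or> adj E r (partner v)"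
        using v unfolding satellites_def by blast
      hence "v = x \<or> partner v = x \<or> v = partner x \<or> partner v = partner x"
        using r(1) v_D by (cases "r = r1") (auto dest: n1 n2)
      thus "v \<in> matched_edge x"
        using partner_eq_iff[OF v_D(1) x(1)] partner_partner[OF v_D(1)] unfolding matched_edge_def
        by auto
    qed
  qed
  thus ?thesis using that r x n1 n2 by blast
qed

lemma satellites_nonempty_card_hosts: "v \<in> satellites u \<Longrightarrow> card (hosts u) = 2"
  unfolding satellites_def by blast

lemma satellite_hosts_empty:
  assumes u: "u \<in> D" and v: "v \<in> satellites u"
  shows "hosts v = {}"
proof (rule ccontr)
  assume "hosts v \<noteq> {}"
  then obtain r where r_v: "r \<in> hosts v" by blast
  obtain r1 r2 x where c: "hosts u = {r1, r2}" "r1 \<noteq> r2" "x \<in> D" "x \<notin> matched_edge u"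
    "\<And>z. adj E r1 z \<Longrightarrow> z \<in> matched_edge u \<union> {x}"
    "\<And>z. adj E r2 z \<Longrightarrow> z \<in> matched_edge u \<union> {partner x}"
    "satellites u = matched_edge x"
    using two_hosts_configuration[OF u satellites_nonempty_card_hosts[OF v]] by metis
  have "hosts v = hosts x"
    using v c(3,7) hosts_partner unfolding matched_edge_def by auto
  hence r: "r \<in> hosts x" using r_v by blast
  have "r \<noteq> r1" "r \<noteq> r2" using host_unique[OF u c(3), of r] r c(1,4) by auto
  let ?X = "matched_edge u \<union> matched_edge x"
  let ?W = "{r1, r2, r}"
  have nbrs: "z \<in> ?X" if "w \<in> {r1, r2}" "adj E w z" for w z
    using that c(5,6) self_in_matched_edge partner_in_matched_edge[OF c(3)] by blast
  have X_D: "?X \<subseteq> D" using u c(3) matched_edge_subset by blast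
  have "2 * card ?W \<le> card ?X"
  proof (rule exchange_bound[OF X_D])
    show "\<forall>a\<in>?X. partner a \<in> ?X" using u c(3) partner_in_matched_edge by blast
    show W: "?W \<subseteq> V - D" using c(1) r hostsD by blast
    show "\<forall>a\<in>?W. \<forall>b\<in>?W. \<not> adj E a b"
    proof (intro ballI notI)
      fix a b assume ab: "a \<in> ?W" "b \<in> ?W" "adj E a b"
      hence "a \<in> {r1, r2} \<or> b \<in> {r1, r2} \<or> a = b" by blast
      thus False using ab nbrs[of a b] nbrs[of b a] adj_commute adjD W X_D by blast
    qed
    show "\<forall>a\<in>D - ?X. \<not> ((\<exists>w\<in>?W. adj E w a) \<and> (\<exists>w\<in>?W. adj E w (partner a)))"
    proof (intro ballI notI)
      fix a assume a: "a \<in> D - ?X" and "(\<exists>w\<in>?W. adj E w a) \<and> (\<exists>w\<in>?W. adj E w (partner a))"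
      moreover have "partner a \<notin> ?X"
        using a u c(3) partner_notin_matched_edge by blast
      ultimately have "adj E r a" "adj E r (partner a)" using nbrs a by blast+
      moreover have "distinct [x, partner x, a, partner a]"
        using a c(3) distinct_matched_edges by blast
      ultimately show False using no_four_neighbours[of r x "partner x" a "partner a"] r hostsD by blast
    qed
  qed
  moreover have "card ?W = 3" using c(2) \<open>r \<noteq> r1\<close> \<open>r \<noteq> r2\<close> by auto
  moreover have "card ?X = 4"
    using card_Un_matched_edge[OF c(3) finite_matched_edge] matched_edge_disjoint[OF u c(3,4)]
      card_matched_edge[OF u] by simp
  ultimately show False by simp
qed

lemma satellite_owner_unique:
  assumes u1: "u1 \<in> D" and u2: "u2 \<in> D" and v: "v \<in> satellites u1" "v \<in> satellites u2"
  shows "u2 \<in> matched_edge u1"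
proof (rule ccontr)
  assume u12: "u2 \<notin> matched_edge u1"
  obtain r1 r2 x where c: "hosts u1 = {r1, r2}" "r1 \<noteq> r2" "x \<in> D" "x \<notin> matched_edge u1"
    "\<And>z. adj E r1 z \<Longrightarrow> z \<in> matched_edge u1 \<union> {x}"
    "\<And>z. adj E r2 z \<Longrightarrow> z \<in> matched_edge u1 \<union> {partner x}"
    "satellites u1 = matched_edge x"
    using two_hosts_configuration[OF u1 satellites_nonempty_card_hosts[OF v(1)]] by metis
  obtain s1 s2 y where d: "hosts u2 = {s1, s2}" "s1 \<noteq> s2" "y \<in> D" "y \<notin> matched_edge u2"
    "\<And>z. adj E s1 z \<Longrightarrow> z \<in> matched_edge u2 \<union> {y}"
    "\<And>z. adj E s2 z \<Longrightarrow> z \<in> matched_edge u2 \<union> {partner y}"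
    "satellites u2 = matched_edge y"
    using two_hosts_configuration[OF u2 satellites_nonempty_card_hosts[OF v(2)]] by metis
  have xy: "matched_edge y = matched_edge x"
    using matched_edge_eq[OF c(3), of v] matched_edge_eq[OF d(3), of v] v c(7) d(7) by simp
  have x_u2: "x \<notin> matched_edge u2"
    using matched_edge_disjoint[OF u2 d(3,4)] xy self_in_matched_edge by blast
  let ?X = "matched_edge u1 \<union> matched_edge u2 \<union> matched_edge x"
  let ?W = "{r1, r2, s1, s2}"
  have "{x, partner x, y, partner y} \<subseteq> matched_edge x"
    using xy self_in_matched_edge[of x] self_in_matched_edge[of y]
      partner_in_matched_edge[OF c(3), of x] partner_in_matched_edge[OF d(3), of y] by auto
  hence nbrs: "\<forall>w\<in>?W. \<forall>z. adj E w z \<longrightarrow> z \<in> ?X"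
    using c(5,6) d(5,6) by blast
  have "2 * card ?W \<le> card ?X"
  proof (rule exchange_bound_neighbourhood[OF _ _ _ nbrs])
    show "?X \<subseteq> D" using u1 u2 c(3) matched_edge_subset by blast
    show "\<forall>a\<in>?X. partner a \<in> ?X" using u1 u2 c(3) partner_in_matched_edge by blast
    show "?W \<subseteq> V - D" using c(1) d(1) hostsD by blast
  qed
  moreover have "card ?W = 4"
  proof -
    have "s1 \<notin> {r1, r2}" "s2 \<notin> {r1, r2}"
      using host_unique[OF u1 u2, of s1] host_unique[OF u1 u2, of s2] c(1) d(1) u12 by blast+
    thus ?thesis using c(2) d(2) by (auto simp: card_insert_if)
  qed
  moreover have "card ?X = 6"
    using card_Un_matched_edge[OF c(3)] card_Un_matched_edge[OF u2 finite_matched_edge]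
      matched_edge_disjoint[OF u1 u2 u12] matched_edge_disjoint[OF u1 c(3,4)]
      matched_edge_disjoint[OF u2 c(3) x_u2] card_matched_edge[OF u1] finite_matched_edge
    by (simp add: Int_Un_distrib Int_commute)
  ultimately show False by simp
qed

lemma satellites_partner_closed: "u \<in> D \<Longrightarrow> v \<in> satellites u \<Longrightarrow> partner v \<in> satellites u"
  using two_hosts_configuration[OF _ satellites_nonempty_card_hosts] partner_in_matched_edge
  by metis

lemma satellites_partner: "u \<in> D \<Longrightarrow> satellites (partner u) = satellites u"
  unfolding satellites_def using matched_edge_partner hosts_partner by simp

definition is_satellite :: "'a \<Rightarrow> bool" where
  "is_satellite v \<longleftrightarrow> (\<exists>u\<in>D. v \<in> satellites u)"

lemma is_satellite_partner: "v \<in> D \<Longrightarrow> is_satellite (partner v) = is_satellite v"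
  unfolding is_satellite_def using satellites_partner_closed partner_partner by metis

lemma is_satellite_matched_edge:
  "u \<in> D \<Longrightarrow> z \<in> matched_edge u \<Longrightarrow> is_satellite z = is_satellite u"
  unfolding matched_edge_def using is_satellite_partner by auto

lemma two_hosts_not_satellite: "u \<in> D \<Longrightarrow> card (hosts u) = 2 \<Longrightarrow> \<not> is_satellite u"
  unfolding is_satellite_def using satellite_hosts_empty by fastforce

definition block :: "'a \<Rightarrow> 'a set" where
  "block u = matched_edge u \<union> hosts u \<union> satellites u"

lemma block_eq:
  assumes "u \<in> D" "w \<in> matched_edge u"
  shows "block w = block u"
proof -
  have "block (partner u) = block u"
    unfolding block_def using matched_edge_partner hosts_partner satellites_partner assms(1) by simp
  moreover have "w = u \<or> w = partner u" using assms(2) unfolding matched_edge_def by blast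
  ultimately show ?thesis by blast
qed

lemma block_subset: "u \<in> D \<Longrightarrow> block u \<subseteq> V"
  unfolding block_def using matched_edge_subset D_subset hostsD satellites_subset by blast

lemma block_cover:
  assumes "v \<in> V"
  shows "\<exists>u\<in>D. \<not> is_satellite u \<and> v \<in> block u"
proof (cases "v \<in> D")
  case True
  show ?thesis
  proof (cases "is_satellite v")
    case False
    thus ?thesis using True self_in_matched_edge unfolding block_def by blast
  next
    case True
    then obtain u where "u \<in> D" "v \<in> satellites u" unfolding is_satellite_def by blast
    thus ?thesis
      using two_hosts_not_satellite satellites_nonempty_card_hosts unfolding block_def by blast
  qed
next
  case False
  then obtain u where u: "u \<in> D" "v \<in> hosts u" using outside_vertex_hosted assms by blast
  hence "\<not> is_satellite u" using satellite_hosts_empty unfolding is_satellite_def by blast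
  thus ?thesis using u unfolding block_def by blast
qed

lemma block_disjoint:
  assumes u: "u \<in> D" "\<not> is_satellite u" and w: "w \<in> D" "\<not> is_satellite w"
    and z: "z \<in> block u" "z \<in> block w"
  shows "block w = block u"
proof -
  have sat: "is_satellite z" if "z \<in> satellites v" "v \<in> D" for v
    using that unfolding is_satellite_def by blast
  have "w \<in> matched_edge u"
  proof (cases "z \<in> D")
    case True
    hence "z \<in> matched_edge u \<union> satellites u" "z \<in> matched_edge w \<union> satellites w"
      using z hostsD unfolding block_def by blast+
    \<comment> \<open>a satellite never lies in the matched edge of a non-satellite\<close>
    thus ?thesis
      using satellite_owner_unique[OF u(1) w(1)] is_satellite_matched_edge sat u w
        matched_edge_eq self_in_matched_edge by (metis Un_iff)
  next
    case False
    hence "z \<in> hosts u" "z \<in> hosts w"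
      using z matched_edge_subset[OF u(1)] matched_edge_subset[OF w(1)] satellites_subset
      unfolding block_def by blast+
    thus ?thesis using host_unique u w by blast
  qed
  thus ?thesis using block_eq u by blast
qed

definition blocks :: "'a set set" where
  "blocks = block ` {u \<in> D. \<not> is_satellite u}"

lemma partition_blocks: "partition_on V blocks"
proof (rule partition_onI)
  show "\<Union> blocks = V"
    unfolding blocks_def using block_subset block_cover by blast
  show "disjnt X Y" if "X \<in> blocks" "Y \<in> blocks" "X \<noteq> Y" for X Y
    using that block_disjoint unfolding blocks_def disjnt_def by blast
  show "{} \<notin> blocks"
    unfolding blocks_def block_def using self_in_matched_edge by blast
qed

definition template_copy :: "'a set \<Rightarrow> nat \<Rightarrow> (nat \<Rightarrow> 'a) \<Rightarrow> bool" where
  "template_copy X t f \<longleftrightarrow> t \<in> {0, 1, 2} \<and> bij_betw f (templ_V t) X \<and>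
     (\<forall>e\<in>templ_E t. f ` e \<in> E) \<and> D \<inter> X = f ` templ_M t \<and>
     (\<forall>a\<in>X \<inter> D. \<exists>e\<in>templ_E t. matched_edge a = f ` e)"

lemma templ_V_lessThan: "templ_V t = {..<(if t = 0 then 2 else if t = 1 then 3 else 6)}"
  by (auto simp: templ_V_def)

lemma block_no_host:
  assumes u: "u \<in> D" and "hosts u = {}"
  shows "template_copy (block u) 0 ((!) [u, partner u])"
  unfolding template_copy_def
proof (intro conjI)
  have pu: "partner u \<in> D" "partner u \<noteq> u" "{u, partner u} \<in> E"
    using u partner_in_D partner_neq adj_partner adj_commute unfolding adj_def by blast+
  have X: "block u = {u, partner u}"
    using assms unfolding block_def satellites_def matched_edge_def by auto
  show "bij_betw ((!) [u, partner u]) (templ_V 0) (block u)"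
    unfolding X by (rule bij_betw_nth) (use pu in \<open>auto simp: templ_V_lessThan\<close>)
  show "\<forall>e\<in>templ_E 0. (!) [u, partner u] ` e \<in> E" using pu by (simp add: templ_E_def)
  show "D \<inter> block u = (!) [u, partner u] ` templ_M 0" using X u pu by (auto simp: templ_M_def)
  show "\<forall>a\<in>block u \<inter> D. \<exists>e\<in>templ_E 0. matched_edge a = (!) [u, partner u] ` e"
    using X matched_edge_partner[OF u] by (auto simp: templ_E_def matched_edge_def)
qed simp

lemma block_one_host:
  assumes u: "u \<in> D" and "hosts u = {r}"
  shows "template_copy (block u) 1 ((!) [u, partner u, r])"
  unfolding template_copy_def
proof (intro conjI)
  have pu: "partner u \<in> D" "partner u \<noteq> u" "{u, partner u} \<in> E"
    using u partner_in_D partner_neq adj_partner adj_commute unfolding adj_def by blast+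
  have r: "{r, u} \<in> E" "{r, partner u} \<in> E" "r \<notin> D" using assms hostsD unfolding adj_def by auto
  have X: "block u = {u, partner u, r}"
    using assms unfolding block_def satellites_def matched_edge_def by auto
  show "bij_betw ((!) [u, partner u, r]) (templ_V 1) (block u)"
    unfolding X by (rule bij_betw_nth) (use pu u r in \<open>simp_all add: templ_V_lessThan\<close>, blast)
  show "\<forall>e\<in>templ_E 1. (!) [u, partner u, r] ` e \<in> E"
    using pu r by (auto simp: templ_E_def insert_commute)
  show "D \<inter> block u = (!) [u, partner u, r] ` templ_M 1" using X u pu r by (auto simp: templ_M_def)
  show "\<forall>a\<in>block u \<inter> D. \<exists>e\<in>templ_E 1. matched_edge a = (!) [u, partner u, r] ` e"
    using X r matched_edge_partner[OF u] by (auto simp: templ_E_def matched_edge_def)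
qed simp

text \<open>The hosts play the vertices a, b and the satellite edge plays xy of the K4* template.\<close>
lemma block_two_hosts:
  assumes u: "u \<in> D" and two: "card (hosts u) = 2"
  shows "\<exists>f. template_copy (block u) 2 f"
proof -
  obtain r1 r2 x where c: "hosts u = {r1, r2}" "r1 \<noteq> r2" "x \<in> D" "x \<notin> matched_edge u"
    "adj E r1 x" "adj E r2 (partner x)" "satellites u = matched_edge x"
    using two_hosts_configuration[OF u two] by metis
  let ?xs = "[r1, r2, u, partner u, x, partner x]"
  have r: "{r1, u} \<in> E" "{r1, partner u} \<in> E" "{r2, u} \<in> E" "{r2, partner u} \<in> E"
    "{r1, x} \<in> E" "{r2, partner x} \<in> E" "r1 \<notin> D" "r2 \<notin> D"
    using c hostsD unfolding adj_def by auto
  have E: "{u, partner u} \<in> E" "{x, partner x} \<in> E"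
    using u c(3) adj_partner adj_commute unfolding adj_def by blast+
  have D: "partner u \<in> D" "partner x \<in> D" using u c(3) partner_in_D by blast+
  have X: "block u = set ?xs" using c unfolding block_def matched_edge_def by auto
  have "template_copy (block u) 2 ((!) ?xs)"
    unfolding template_copy_def
  proof (intro conjI)
    have "distinct [u, partner u, x, partner x]" using distinct_matched_edges[OF u c(3,4)] .
    hence "distinct ?xs" using r D u c(2,3) by auto
    thus "bij_betw ((!) ?xs) (templ_V 2) (block u)"
      unfolding X by (rule bij_betw_nth) (simp_all add: templ_V_lessThan)
    show "\<forall>e\<in>templ_E 2. (!) ?xs ` e \<in> E"
      using r E by (auto simp: templ_E_def insert_commute)
    show "D \<inter> block u = (!) ?xs ` templ_M 2" using X u r D c(3) by (auto simp: templ_M_def)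
    have "matched_edge u = (!) ?xs ` {2, 3}" "matched_edge x = (!) ?xs ` {4, 5}"
      by (auto simp: matched_edge_def)
    moreover have "{2, 3} \<in> templ_E 2" "{4, 5} \<in> templ_E 2" by (auto simp: templ_E_def)
    moreover have "matched_edge a = matched_edge u \<or> matched_edge a = matched_edge x"
      if "a \<in> block u \<inter> D" for a
      using that X r matched_edge_partner u c(3) by auto
    ultimately show "\<forall>a\<in>block u \<inter> D. \<exists>e\<in>templ_E 2. matched_edge a = (!) ?xs ` e" by metis
  qed simp
  thus ?thesis by blast
qed

lemma block_template_copy:
  assumes u: "u \<in> D"
  shows "\<exists>t f. template_copy (block u) t f"
proof -
  have "card (hosts u) = 0 \<or> card (hosts u) = 1 \<or> card (hosts u) = 2"
    using card_hosts_le_2[OF u] by linarith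
  thus ?thesis
  proof (elim disjE)
    assume "card (hosts u) = 0"
    thus ?thesis using block_no_host[OF u] finite_hosts by auto
  next
    assume "card (hosts u) = 1"
    then obtain r where "hosts u = {r}" by (rule card_1_singletonE)
    thus ?thesis using block_one_host[OF u] by blast
  next
    assume "card (hosts u) = 2"
    thus ?thesis using block_two_hosts[OF u] by blast
  qed
qed

lemma in_class_G: "in_class_G V E"
proof -
  have "\<forall>X\<in>blocks. \<exists>t f. template_copy X t f"
    using block_template_copy unfolding blocks_def by blast
  then obtain ty where "\<forall>X\<in>blocks. \<exists>f. template_copy X (ty X) f" by metis
  then obtain emb where copies: "\<forall>X\<in>blocks. template_copy X (ty X) (emb X)" by metis
  have added: "card (e \<inter> D) \<le> 1"
    if e: "e \<in> E" and not_copy: "\<not> (\<exists>X\<in>blocks. \<exists>e'\<in>templ_E (ty X). e = emb X ` e')" for e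
  proof (rule ccontr)
    obtain a b where ab: "e = {a, b}" "a \<noteq> b" "a \<in> V"
      using e simple unfolding simple_graph_def by blast
    assume many: "\<not> card (e \<inter> D) \<le> 1"
    have "a \<in> D \<and> b \<in> D"
    proof (rule ccontr)
      assume "\<not> (a \<in> D \<and> b \<in> D)"
      hence "e \<inter> D \<subseteq> {a} \<or> e \<inter> D \<subseteq> {b}" using ab(1) by blast
      hence "card (e \<inter> D) \<le> card {a} \<or> card (e \<inter> D) \<le> card {b}"
        using card_mono[of "{a}" "e \<inter> D"] card_mono[of "{b}" "e \<inter> D"] by blast
      thus False using many by simp
    qed
    hence D: "a \<in> D" "b \<in> D" by blast+
    have "adj E b a" using e ab(1) by (simp add: adj_def insert_commute)
    hence "b = partner a" using partner_unique D by blast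
    hence "e = matched_edge a" using ab(1) by (simp add: matched_edge_def)
    moreover obtain X where X: "X \<in> blocks" "a \<in> X"
      using partition_onD1[OF partition_blocks] ab(3) by blast
    moreover have "template_copy X (ty X) (emb X)" using copies X(1) by blast
    hence "\<exists>e'\<in>templ_E (ty X). matched_edge a = emb X ` e'"
      using X(2) D(1) unfolding template_copy_def by blast
    ultimately show False using not_copy by blast
  qed
  have "\<forall>X\<in>blocks. ty X \<in> {0, 1, 2} \<and> bij_betw (emb X) (templ_V (ty X)) X \<and>
      (\<forall>e\<in>templ_E (ty X). emb X ` e \<in> E) \<and> D \<inter> X = emb X ` templ_M (ty X)"
    using copies by (simp add: template_copy_def)
  thus ?thesis
    unfolding in_class_G_def using partition_blocks added
    by (intro disjI2 exI[of _ blocks] exI[of _ D] exI[of _ ty] exI[of _ emb]) blast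
qed

end

theorem theorem3:
  fixes V :: "'a set" and E :: "'a set set"
  assumes "simple_graph V E" and "connected_graph V E" and "subcubic V E"
  shows "2 * alpha V E = diss V E \<longleftrightarrow> in_class_G V E"
proof -
  interpret subcubic_graph V E using assms(1,3) by unfold_locales
  show ?thesis
  proof
    assume tight: "2 * alpha V E = diss V E"
    show "in_class_G V E"
    proof (cases "is_K4 V E")
      case True
      thus ?thesis unfolding in_class_G_def by blast
    next
      case False
      obtain D where "dissociation_set V E D" "card D = diss V E" by (rule diss_attained)
      with tight False assms(2) interpret tight_connected_graph V E D by unfold_locales
      show ?thesis by (rule in_class_G)
    qed
  next
    assume "in_class_G V E"
    thus "2 * alpha V E = diss V E"
      using in_class_G_twice_alpha_le_diss diss_le_twice_alpha by (simp add: le_antisym)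
  qed
qed

end
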